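(* Let $\mathcal{K}$ be the fraction field of a discrete valuation ring $\mathscr{O}_{\mathcal{K}}$ with residue field $k$ and normalized discrete valuation $v:\mathcal{K}^\times\to\mathbf{Z}$. Let $E$ be an elliptic curve over $\mathcal{K}$ with potentially good reduction, and let $\Delta$ be the discriminant of a Weierstrass model of $E$ over $\mathcal{K}$. If $E$ has good reduction, then $v(\Delta) \equiv 0 \bmod 12$. Conversely, if $v(\Delta)\equiv 0 \bmod 12$ then $E$ has good reduction, provided that either (1) $\mathrm{char}(k) \neq 2, 3$, or (2) $\mathrm{char}(k)\neq 2$ and $E(\mathcal{K})[2] \neq O$.
   Context: $\Delta$ is well defined modulo $(\mathcal{K}^\times)^{12}$, independent of the choice of Weierstrass model. *)

theory Defs
  imports Main
begin

text \<open>A normalized discrete valuation on a field: a surjective map from the nonzero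
  elements onto the integers, multiplicative-to-additive, satisfying the ultrametric
  inequality. (Its values at 0 are irrelevant.) The DVR is {x. x = 0 or v x >= 0}.\<close>

definition discrete_valuation :: "('a::field \<Rightarrow> int) \<Rightarrow> bool" where
  "discrete_valuation v \<longleftrightarrow>
     (\<forall>x y. x \<noteq> 0 \<longrightarrow> y \<noteq> 0 \<longrightarrow> v (x * y) = v x + v y) \<and>
     (\<forall>x y. x \<noteq> 0 \<longrightarrow> y \<noteq> 0 \<longrightarrow> x + y \<noteq> 0 \<longrightarrow> v (x + y) \<ge> min (v x) (v y)) \<and>
     (\<forall>n. \<exists>x. x \<noteq> 0 \<and> v x = n)"

definition integral :: "('a::field \<Rightarrow> int) \<Rightarrow> 'a \<Rightarrow> bool" where
  "integral v x \<longleftrightarrow> x = 0 \<or> v x \<ge> 0"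

text \<open>The residue field has characteristic different from p iff p is a unit of the
  valuation ring, i.e. p \<noteq> 0 in the field and v(p) = 0.\<close>
definition residue_char_ne :: "('a::field \<Rightarrow> int) \<Rightarrow> nat \<Rightarrow> bool" where
  "residue_char_ne v p \<longleftrightarrow> (of_nat p :: 'a) \<noteq> 0 \<and> v (of_nat p) = 0"

text \<open>(a1,a2,a3,a4,a6) represents y^2 + a1 x y + a3 y = x^3 + a2 x^2 + a4 x + a6.\<close>
type_synonym 'a weier = "'a \<times> 'a \<times> 'a \<times> 'a \<times> 'a"

fun disc :: "'a::comm_ring_1 weier \<Rightarrow> 'a" where
  "disc (a1, a2, a3, a4, a6) =
    (let b2 = a1^2 + 4*a2; b4 = 2*a4 + a1*a3; b6 = a3^2 + 4*a6;
         b8 = a1^2*a6 + 4*a2*a6 - a1*a3*a4 + a2*a3^2 - a4^2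
     in - (b2^2*b8) - 8*b4^3 - 27*b6^2 + 9*b2*b4*b6)"

definition elliptic :: "'a::field weier \<Rightarrow> bool" where
  "elliptic E \<longleftrightarrow> disc E \<noteq> 0"

fun map_weier :: "('a \<Rightarrow> 'b) \<Rightarrow> 'a weier \<Rightarrow> 'b weier" where
  "map_weier f (a1, a2, a3, a4, a6) = (f a1, f a2, f a3, f a4, f a6)"

text \<open>Change of variables x = u^2 x' + r, y = u^3 y' + s u^2 x' + t (Silverman III.1).\<close>
fun change_coords :: "'a::field \<Rightarrow> 'a \<Rightarrow> 'a \<Rightarrow> 'a \<Rightarrow> 'a weier \<Rightarrow> 'a weier" where
  "change_coords u r s t (a1, a2, a3, a4, a6) =
    ((a1 + 2*s) / u,
     (a2 - s*a1 + 3*r - s^2) / u^2,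
     (a3 + r*a1 + 2*t) / u^3,
     (a4 - s*a3 + 2*r*a2 - (t + r*s)*a1 + 3*r^2 - 2*s*t) / u^4,
     (a6 + r*a4 + r^2*a2 + r^3 - t*a3 - t^2 - r*t*a1) / u^6)"

definition integral_weier :: "('a::field \<Rightarrow> int) \<Rightarrow> 'a weier \<Rightarrow> bool" where
  "integral_weier v E \<longleftrightarrow>
     (case E of (a1, a2, a3, a4, a6) \<Rightarrow>
        integral v a1 \<and> integral v a2 \<and> integral v a3 \<and> integral v a4 \<and> integral v a6)"

text \<open>Good reduction: some Weierstrass model of E (over the same field) is integral and has
  unit discriminant, i.e. its reduction modulo the maximal ideal is nonsingular.\<close>
definition good_reduction :: "('a::field \<Rightarrow> int) \<Rightarrow> 'a weier \<Rightarrow> bool" where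
  "good_reduction v E \<longleftrightarrow>
     (\<exists>u r s t. u \<noteq> 0 \<and> integral_weier v (change_coords u r s t E)
                \<and> disc (change_coords u r s t E) \<noteq> 0
                \<and> v (disc (change_coords u r s t E)) = 0)"

text \<open>Nontrivial 2-torsion point in E(K): an affine point P with P = -P.\<close>
fun has_2torsion :: "'a::field weier \<Rightarrow> bool" where
  "has_2torsion (a1, a2, a3, a4, a6) =
    (\<exists>x y. y^2 + a1*x*y + a3*y = x^3 + a2*x^2 + a4*x + a6 \<and> y = - y - a1*x - a3)"

definition field_hom :: "('a::field \<Rightarrow> 'b::field) \<Rightarrow> bool" where
  "field_hom i \<longleftrightarrow> i 1 = 1 \<and> (\<forall>x y. i (x + y) = i x + i y) \<and> (\<forall>x y. i (x * y) = i x * i y)"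

definition finite_extension :: "('a::field \<Rightarrow> 'b::field) \<Rightarrow> bool" where
  "finite_extension i \<longleftrightarrow> field_hom i \<and>
     (\<exists>B. finite B \<and> (\<forall>y. \<exists>c. y = (\<Sum>b\<in>B. i (c b) * b)))"

definition extends_valuation :: "('a::field \<Rightarrow> 'b::field) \<Rightarrow> ('a \<Rightarrow> int) \<Rightarrow> ('b \<Rightarrow> int) \<Rightarrow> bool" where
  "extends_valuation i v w \<longleftrightarrow> (\<exists>e::int. e > 0 \<and> (\<forall>x. x \<noteq> 0 \<longrightarrow> w (i x) = e * v x))"

text \<open>Potentially good reduction, relative to the extension field type 'b: E acquires good
  reduction over a finite extension L (of type 'b) w.r.t. a valuation extending v.\<close>
definition pot_good_reduction_in :: "'b::field itself \<Rightarrow> ('a::field \<Rightarrow> int) \<Rightarrow> 'a weier \<Rightarrow> bool" where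
  "pot_good_reduction_in (_ :: 'b::field itself) v E \<longleftrightarrow>
     (\<exists>(i :: 'a \<Rightarrow> 'b::field) w. finite_extension i \<and> discrete_valuation w \<and>
        extends_valuation i v w \<and> good_reduction w (map_weier i E))"

end

(*
  A change of coordinates with scaling u divides the discriminant by u^12, so a model with
  unit discriminant forces 12 to divide v(Delta).

  Conversely, the j-invariant c4^3 / Delta does not change under changes of coordinates or
  field embeddings, and it is integral for a model with good reduction; hence potentially good
  reduction makes j integral. If v(Delta) = 12 m, rescaling a suitable normal form of E by some
  u with v(u) = m gives a model with unit discriminant, on which integrality of j makes c4
  integral, and then c6 as well since c4^3 - c6^2 = 1728 Delta. If the residue characteristic
  is not 2 or 3, the normal form y^2 = x^3 + A x + B has A = - c4/48 and B = - c6/864. If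
  instead E has a rational 2-torsion point, moving it to (0, 0) gives y^2 = x^3 + A x^2 + B x,
  with Delta = 16 B^2 (A^2 - 4 B) and c4 = 16 (A^2 - 3 B); a unit Delta and an integral c4
  force v(B) = v(A^2 - 4 B) = 0, hence integral A and B.
*)
theory Submission
  imports Defs
begin

section \<open>Invariants and changes of coordinates\<close>

text \<open>Silverman's c4 = b2^2 - 24 b4 and c6 = - b2^3 + 36 b2 b4 - 216 b6.\<close>

fun c4 :: "'a::comm_ring_1 weier \<Rightarrow> 'a" where
  "c4 (a1, a2, a3, a4, a6) = (a1^2 + 4*a2)^2 - 24*(2*a4 + a1*a3)"

fun c6 :: "'a::comm_ring_1 weier \<Rightarrow> 'a" where
  "c6 (a1, a2, a3, a4, a6) =
     - ((a1^2 + 4*a2)^3) + 36*(a1^2 + 4*a2)*(2*a4 + a1*a3) - 216*(a3^2 + 4*a6)"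

definition j_invariant :: "'a::field weier \<Rightarrow> 'a" where
  "j_invariant E = c4 E ^ 3 / disc E"

lemma c4_cube_minus_c6_square: "c4 E ^ 3 - c6 E ^ 2 = 1728 * disc E"
  by (cases E) (simp add: Let_def algebra_simps power2_eq_square power3_eq_cube)

lemma change_coords_split:
  "change_coords u r s t E = change_coords u 0 0 0 (change_coords 1 r s t E)"
  by (cases E) simp

lemma disc_translate: "disc (change_coords 1 r s t E) = disc E"
  by (cases E) (simp add: Let_def algebra_simps power2_eq_square power3_eq_cube)

lemma c4_translate: "c4 (change_coords 1 r s t E) = c4 E"
  by (cases E) (simp add: algebra_simps power2_eq_square power3_eq_cube)

lemma disc_weighted_scale:
  "disc (u*a1, u^2*a2, u^3*a3, u^4*a4, u^6*a6) = u^12 * disc (a1, a2, a3, a4, a6)"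
  by (simp add: Let_def algebra_simps eval_nat_numeral)

lemma c4_weighted_scale:
  "c4 (u*a1, u^2*a2, u^3*a3, u^4*a4, u^6*a6) = u^4 * c4 (a1, a2, a3, a4, a6)"
  by (simp add: algebra_simps eval_nat_numeral)

lemma disc_change_coords:
  fixes u :: "'a::field"
  assumes "u \<noteq> 0"
  shows "disc (change_coords u r s t E) = disc E / u^12"
proof -
  obtain a1 a2 a3 a4 a6 where F: "change_coords 1 r s t E = (a1, a2, a3, a4, a6)"
    by (cases "change_coords 1 r s t E") auto
  have "disc E = disc (u*(a1/u), u^2*(a2/u^2), u^3*(a3/u^3), u^4*(a4/u^4), u^6*(a6/u^6))"
    using assms by (simp flip: F add: disc_translate)
  also have "\<dots> = u^12 * disc (change_coords u r s t E)"
    by (simp only: disc_weighted_scale change_coords_split[of u] F change_coords.simps) simp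
  finally show ?thesis
    using assms by simp
qed

lemma c4_change_coords:
  fixes u :: "'a::field"
  assumes "u \<noteq> 0"
  shows "c4 (change_coords u r s t E) = c4 E / u^4"
proof -
  obtain a1 a2 a3 a4 a6 where F: "change_coords 1 r s t E = (a1, a2, a3, a4, a6)"
    by (cases "change_coords 1 r s t E") auto
  have "c4 E = c4 (u*(a1/u), u^2*(a2/u^2), u^3*(a3/u^3), u^4*(a4/u^4), u^6*(a6/u^6))"
    using assms by (simp flip: F add: c4_translate)
  also have "\<dots> = u^4 * c4 (change_coords u r s t E)"
    by (simp only: c4_weighted_scale change_coords_split[of u] F change_coords.simps) simp
  finally show ?thesis
    using assms by simp
qed

lemma j_invariant_change_coords:
  fixes u :: "'a::field"
  assumes "u \<noteq> 0"
  shows "j_invariant (change_coords u r s t E) = j_invariant E"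
  using assms by (simp add: j_invariant_def disc_change_coords c4_change_coords power_divide
    flip: power_mult)

lemma short_weierstrass_form:
  fixes E :: "'a::field weier"
  assumes "(2::'a) \<noteq> 0" "(3::'a) \<noteq> 0"
  obtains r s t A B where "change_coords 1 r s t E = (0, 0, 0, A, B)"
proof -
  obtain a1 a2 a3 a4 a6 where E: "E = (a1, a2, a3, a4, a6)"
    by (cases E)
  define s where "s = - a1 / 2"
  define r where "r = (s^2 + s*a1 - a2) / 3"
  define t where "t = - (a3 + r*a1) / 2"
  have "a1 + 2*s = 0"
    using assms(1) by (simp add: s_def)
  moreover have "a2 - s*a1 + 3*r - s^2 = 0"
    using assms(2) by (simp add: r_def field_simps)
  moreover have "a3 + r*a1 + 2*t = 0"
    using assms(1) by (simp add: t_def field_simps)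
  ultimately show thesis
    using that[of r s t] by (simp add: E)
qed

lemma two_torsion_form:
  fixes E :: "'a::field weier"
  assumes "(2::'a) \<noteq> 0" "has_2torsion E"
  obtains r s t A B where "change_coords 1 r s t E = (0, A, 0, B, 0)"
proof -
  obtain a1 a2 a3 a4 a6 where E: "E = (a1, a2, a3, a4, a6)"
    by (cases E)
  obtain x y where on_curve: "y^2 + a1*x*y + a3*y = x^3 + a2*x^2 + a4*x + a6"
    and two_torsion: "y = - y - a1*x - a3"
    using assms(2) by (auto simp: E)
  have "a1 + 2*(- a1/2) = 0" "a3 + x*a1 + 2*y = 0"
    "a6 + x*a4 + x^2*a2 + x^3 - y*a3 - y^2 - x*y*a1 = 0"
    using assms(1) on_curve two_torsion by (simp_all add: algebra_simps)
  then show thesis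
    using that[of x "- a1/2" y] by (simp add: E)
qed

section \<open>Field homomorphisms\<close>

context
  fixes i :: "'a::field \<Rightarrow> 'b::field"
  assumes hom: "field_hom i"
begin

lemma field_hom_1: "i 1 = 1"
  and field_hom_add: "i (x + y) = i x + i y"
  and field_hom_mult: "i (x * y) = i x * i y"
  using hom by (simp_all add: field_hom_def)

lemma field_hom_0: "i 0 = 0"
  using field_hom_add[of 0 0] by (metis add.right_neutral add_left_cancel)

lemma field_hom_uminus: "i (- x) = - i x"
  using field_hom_add[of x "- x"] by (simp add: field_hom_0 add_eq_0_iff2)

lemma field_hom_diff: "i (x - y) = i x - i y"
  using field_hom_add[of x "- y"] by (simp add: field_hom_uminus)

lemma field_hom_power: "i (x ^ n) = i x ^ n"
  by (induction n) (simp_all add: field_hom_1 field_hom_mult)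

lemma field_hom_of_nat: "i (of_nat n) = of_nat n"
  by (induction n) (simp_all add: field_hom_0 field_hom_1 field_hom_add)

lemma field_hom_numeral: "i (numeral n) = numeral n"
  using field_hom_of_nat[of "numeral n"] by simp

lemma field_hom_nonzero: "x \<noteq> 0 \<Longrightarrow> i x \<noteq> 0"
  using field_hom_mult[of x "inverse x"] by (auto simp: field_hom_1)

lemma field_hom_divide: "i (x / y) = i x / i y"
proof (cases "y = 0")
  case False
  then have "i (x / y) * i y = i x"
    by (simp flip: field_hom_mult)
  then show ?thesis
    using field_hom_nonzero[OF False] by (simp add: eq_divide_eq)
qed (simp add: field_hom_0)

lemmas field_hom_simps = field_hom_add field_hom_mult field_hom_uminus field_hom_diff
  field_hom_power field_hom_numeral field_hom_divide

lemma field_hom_disc: "i (disc E) = disc (map_weier i E)"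
  by (cases E) (simp add: Let_def field_hom_simps)

lemma field_hom_c4: "i (c4 E) = c4 (map_weier i E)"
  by (cases E) (simp add: field_hom_simps)

lemma field_hom_j_invariant: "i (j_invariant E) = j_invariant (map_weier i E)"
  by (simp add: j_invariant_def field_hom_divide field_hom_power field_hom_c4 field_hom_disc)

end

lemma integral_if_integral_image:
  assumes "field_hom i" "extends_valuation i v w" "integral w (i x)"
  shows "integral v x"
proof (cases "x = 0")
  case False
  obtain e where "e > 0" "w (i x) = e * v x"
    using assms(2) False unfolding extends_valuation_def by blast
  moreover have "w (i x) \<ge> 0"
    using assms(3) field_hom_nonzero[OF assms(1) False] by (simp add: integral_def)
  ultimately show ?thesis
    by (simp add: integral_def zero_le_mult_iff)
qed (simp add: integral_def)

section \<open>Discretely valued fields\<close>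

locale discretely_valued =
  fixes v :: "'a::field \<Rightarrow> int"
  assumes discrete_valuation: "discrete_valuation v"
begin

lemma val_mult: "x \<noteq> 0 \<Longrightarrow> y \<noteq> 0 \<Longrightarrow> v (x * y) = v x + v y"
  using discrete_valuation by (simp add: discrete_valuation_def)

lemma val_add: "x \<noteq> 0 \<Longrightarrow> y \<noteq> 0 \<Longrightarrow> x + y \<noteq> 0 \<Longrightarrow> min (v x) (v y) \<le> v (x + y)"
  using discrete_valuation by (simp add: discrete_valuation_def)

lemma val_surj: "\<exists>x. x \<noteq> 0 \<and> v x = n"
  using discrete_valuation by (simp add: discrete_valuation_def)

lemma val_1 [simp]: "v 1 = 0"
  using val_mult[of 1 1] by simp

lemma val_uminus [simp]: "v (- x) = v x"
proof -
  have "v (-1) = 0"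
    using val_mult[of "-1" "-1"] by simp
  then show ?thesis
    using val_mult[of "-1" x] by (cases "x = 0") simp_all
qed

lemma val_power: "x \<noteq> 0 \<Longrightarrow> v (x ^ n) = int n * v x"
  by (induction n) (simp_all add: val_mult algebra_simps)

lemma val_inverse: "x \<noteq> 0 \<Longrightarrow> v (inverse x) = - v x"
  using val_mult[of x "inverse x"] by simp

lemma val_divide: "x \<noteq> 0 \<Longrightarrow> y \<noteq> 0 \<Longrightarrow> v (x / y) = v x - v y"
  by (simp add: divide_inverse val_mult val_inverse)

lemma val_add_strict:
  assumes "x \<noteq> 0" "y \<noteq> 0" "v x < v y"
  shows "x + y \<noteq> 0" and "v (x + y) = v x"
proof -
  show sum: "x + y \<noteq> 0"
    using assms by (metis add_eq_0_iff val_uminus less_irrefl)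
  have "min (v (x + y)) (v y) \<le> v x"
    using val_add[of "x + y" "- y"] sum assms by simp
  then show "v (x + y) = v x"
    using val_add[of x y] sum assms by linarith
qed

lemma integral_0 [simp]: "integral v 0"
  and integral_1 [simp]: "integral v 1"
  by (simp_all add: integral_def)

lemma integral_uminus [simp]: "integral v (- x) \<longleftrightarrow> integral v x"
  by (simp add: integral_def)

lemma integral_add: "integral v x \<Longrightarrow> integral v y \<Longrightarrow> integral v (x + y)"
  unfolding integral_def using val_add[of x y] by fastforce

lemma integral_diff: "integral v x \<Longrightarrow> integral v y \<Longrightarrow> integral v (x - y)"
  using integral_add[of x "- y"] by simp

lemma integral_mult: "integral v x \<Longrightarrow> integral v y \<Longrightarrow> integral v (x * y)"
  unfolding integral_def using val_mult[of x y] by fastforce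

lemma integral_power: "integral v x \<Longrightarrow> integral v (x ^ n)"
  by (induction n) (simp_all add: integral_mult)

lemma integral_of_nat: "integral v (of_nat n)"
  by (induction n) (simp_all add: integral_add)

lemma integral_numeral: "integral v (numeral n)"
  using integral_of_nat[of "numeral n"] by simp

lemma integral_power_imp_integral: "integral v (x ^ n) \<Longrightarrow> n > 0 \<Longrightarrow> integral v x"
  unfolding integral_def by (cases "x = 0") (simp_all add: val_power zero_le_mult_iff)

lemma integral_mult_unit_iff:
  assumes "c \<noteq> 0" "v c = 0"
  shows "integral v (c * x) \<longleftrightarrow> integral v x"
  using assms unfolding integral_def by (cases "x = 0") (simp_all add: val_mult)

lemma integral_divide_unit_iff:
  assumes "c \<noteq> 0" "v c = 0"
  shows "integral v (x / c) \<longleftrightarrow> integral v x"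
  using assms unfolding integral_def by (cases "x = 0") (simp_all add: val_divide)

lemma residue_char_ne_mult:
  "residue_char_ne v p \<Longrightarrow> residue_char_ne v q \<Longrightarrow> residue_char_ne v (p * q)"
  by (simp add: residue_char_ne_def val_mult)

lemma integral_numeral_mult_iff:
  "residue_char_ne v (numeral n) \<Longrightarrow> integral v (numeral n * x) \<longleftrightarrow> integral v x"
  by (simp add: residue_char_ne_def integral_mult_unit_iff)

lemmas integral_intros =
  integral_add integral_diff integral_mult integral_power integral_numeral

lemma integral_c4: "integral_weier v E \<Longrightarrow> integral v (c4 E)"
  by (cases E) (auto simp: integral_weier_def intro!: integral_intros)

lemma val_disc_change_coords:
  assumes "disc E \<noteq> 0" "u \<noteq> 0"
  shows "v (disc (change_coords u r s t E)) = v (disc E) - 12 * v u"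
  using assms by (simp add: disc_change_coords val_divide val_power)

lemma good_reduction_imp_val_disc_mod_12:
  assumes "good_reduction v E"
  shows "v (disc E) mod 12 = 0"
proof -
  obtain u r s t where u: "u \<noteq> 0" and disc: "disc (change_coords u r s t E) \<noteq> 0"
    and unit: "v (disc (change_coords u r s t E)) = 0"
    using assms unfolding good_reduction_def by blast
  have "disc E \<noteq> 0"
    using disc u by (simp add: disc_change_coords)
  then have "v (disc E) = 12 * v u"
    using val_disc_change_coords[OF _ u, of E r s t] unit by simp
  then show ?thesis
    by simp
qed

lemma exists_scaling_to_unit_disc:
  assumes "disc E \<noteq> 0" "v (disc E) mod 12 = 0"
  obtains u where "u \<noteq> 0" "\<And>r s t. disc (change_coords u r s t E) \<noteq> 0"
    "\<And>r s t. v (disc (change_coords u r s t E)) = 0"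
proof -
  obtain u where u: "u \<noteq> 0" "v u = v (disc E) div 12"
    using val_surj by blast
  then have "v (disc E) = 12 * v u"
    using assms(2) by (metis div_mult_mod_eq add.right_neutral mult.commute)
  with u(1) assms(1) show thesis
    by (intro that) (auto simp: disc_change_coords[OF u(1)] val_divide val_power)
qed

lemma integral_j_invariant_if_integral_unit_disc:
  assumes "integral_weier v E" "disc E \<noteq> 0" "v (disc E) = 0"
  shows "integral v (j_invariant E)"
  using assms integral_c4 integral_power unfolding j_invariant_def
  by (simp add: integral_divide_unit_iff)

lemma integral_c4_c6_if_unit_disc:
  assumes disc: "disc E \<noteq> 0" "v (disc E) = 0" and j: "integral v (j_invariant E)"
  shows "integral v (c4 E)" and "integral v (c6 E)"
proof -
  have "integral v (disc E)"
    using disc by (simp add: integral_def)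
  moreover have "c4 E ^ 3 = j_invariant E * disc E"
    using disc by (simp add: j_invariant_def)
  ultimately show c4: "integral v (c4 E)"
    using j integral_mult integral_power_imp_integral by (metis zero_less_numeral)
  have "c6 E ^ 2 = c4 E ^ 3 - 1728 * disc E"
    using c4_cube_minus_c6_square[of E] by (simp add: algebra_simps)
  then have "integral v (c6 E ^ 2)"
    using c4 \<open>integral v (disc E)\<close> by (simp add: integral_intros)
  then show "integral v (c6 E)"
    using integral_power_imp_integral[of "c6 E" 2] by simp
qed

lemma pot_good_reduction_imp_integral_j_invariant:
  assumes "pot_good_reduction_in TYPE('b::field) v E"
  shows "integral v (j_invariant E)"
proof -
  obtain i :: "'a \<Rightarrow> 'b" and w where hom: "field_hom i" and w: "discrete_valuation w"
    and ext: "extends_valuation i v w" and good: "good_reduction w (map_weier i E)"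
    using assms unfolding pot_good_reduction_in_def finite_extension_def by blast
  interpret w: discretely_valued w
    by (rule discretely_valued.intro) (rule w)
  obtain u r s t where "u \<noteq> 0" and model: "integral_weier w (change_coords u r s t (map_weier i E))"
    "disc (change_coords u r s t (map_weier i E)) \<noteq> 0"
    "w (disc (change_coords u r s t (map_weier i E))) = 0"
    using good unfolding good_reduction_def by blast
  then have "integral w (j_invariant (map_weier i E))"
    using w.integral_j_invariant_if_integral_unit_disc[OF model] by (simp add: j_invariant_change_coords)
  then show ?thesis
    using integral_if_integral_image[OF hom ext] by (simp add: field_hom_j_invariant[OF hom])
qed

lemma good_reduction_if_rescalings_integral:
  assumes disc: "disc E \<noteq> 0" "v (disc E) mod 12 = 0" and j: "integral v (j_invariant E)"
    and rescaled_integral: "\<And>u. u \<noteq> 0 \<Longrightarrow> disc (change_coords u r s t E) \<noteq> 0 \<Longrightarrow>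
      v (disc (change_coords u r s t E)) = 0 \<Longrightarrow> integral v (c4 (change_coords u r s t E)) \<Longrightarrow>
      integral v (c6 (change_coords u r s t E)) \<Longrightarrow> integral_weier v (change_coords u r s t E)"
  shows "good_reduction v E"
proof -
  obtain u where u: "u \<noteq> 0" and unit: "disc (change_coords u r s t E) \<noteq> 0"
    "v (disc (change_coords u r s t E)) = 0"
    using exists_scaling_to_unit_disc[OF disc] by metis
  moreover have "integral v (j_invariant (change_coords u r s t E))"
    using j by (simp add: j_invariant_change_coords[OF u])
  ultimately have "integral_weier v (change_coords u r s t E)"
    using rescaled_integral integral_c4_c6_if_unit_disc by blast
  with u unit show ?thesis
    unfolding good_reduction_def by blast
qed

lemma integral_weier_short_form:
  assumes "residue_char_ne v 2" "residue_char_ne v 3"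
    and "integral v (c4 (0, 0, 0, A, B))" "integral v (c6 (0, 0, 0, A, B))"
  shows "integral_weier v (0, 0, 0, A, B)"
proof -
  have "residue_char_ne v (2*2*2*2*3)" "residue_char_ne v (2*2*2*2*2*3*3*3)"
    using assms(1,2) by (simp_all only: residue_char_ne_mult)
  then have "residue_char_ne v 48" "residue_char_ne v 864"
    by simp_all
  moreover have "c4 (0, 0, 0, A, B) = - (48 * A)" "c6 (0, 0, 0, A, B) = - (864 * B)"
    by simp_all
  ultimately show ?thesis
    using assms(3,4) by (simp add: integral_weier_def integral_numeral_mult_iff)
qed

lemma integral_weier_two_torsion_form:
  assumes "residue_char_ne v 2"
    and disc: "disc (0, A, 0, B, 0) \<noteq> 0" "v (disc (0, A, 0, B, 0)) = 0"
    and c4: "integral v (c4 (0, A, 0, B, 0))"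
  shows "integral_weier v (0, A, 0, B, 0)"
proof -
  define D where "D = A^2 - 4*B"
  have "residue_char_ne v (2*2*2*2)"
    using assms(1) by (simp only: residue_char_ne_mult)
  then have 16: "(16::'a) \<noteq> 0" "v 16 = 0" "residue_char_ne v 16"
    by (simp_all add: residue_char_ne_def)
  have disc_eq: "disc (0, A, 0, B, 0) = 16 * (B^2 * D)"
    by (simp add: D_def Let_def algebra_simps power2_eq_square power3_eq_cube)
  then have "B \<noteq> 0" "D \<noteq> 0"
    using disc(1) by auto
  then have val: "2 * v B + v D = 0"
    using disc(2) 16 unfolding disc_eq by (simp add: val_mult val_power)
  have c4_eq: "c4 (0, A, 0, B, 0) = 16 * (D + B)"
    by (simp add: D_def algebra_simps power2_eq_square)
  have sum: "integral v (D + B)"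
    using c4 16 unfolding c4_eq by (simp only: integral_numeral_mult_iff)
  have "v B = 0"
  proof (rule ccontr)
    assume "v B \<noteq> 0"
    \<comment> \<open>by val, the one of B, D of smaller valuation has negative valuation and
      dominates the sum\<close>
    then have "D + B \<noteq> 0 \<and> v (D + B) < 0"
      using val val_add_strict[OF \<open>B \<noteq> 0\<close> \<open>D \<noteq> 0\<close>] val_add_strict[OF \<open>D \<noteq> 0\<close> \<open>B \<noteq> 0\<close>]
      by (cases "v B < 0") (simp_all add: add.commute)
    with sum show False
      by (simp add: integral_def)
  qed
  then have "integral v B" "integral v D"
    using val by (simp_all add: integral_def)
  moreover have "A^2 = D + 4 * B"
    by (simp add: D_def)
  ultimately have "integral v (A^2)"
    by (simp add: integral_add integral_mult integral_numeral)
  then show ?thesis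
    using \<open>integral v B\<close> integral_power_imp_integral[of A 2]
    by (simp add: integral_weier_def)
qed

lemma good_reduction_if_residue_char_not_2_3:
  assumes "residue_char_ne v 2" "residue_char_ne v 3"
    and "disc E \<noteq> 0" "v (disc E) mod 12 = 0" "integral v (j_invariant E)"
  shows "good_reduction v E"
proof -
  obtain r s t A B where form: "change_coords 1 r s t E = (0, 0, 0, A, B)"
    using short_weierstrass_form assms(1,2) by (metis residue_char_ne_def of_nat_numeral)
  have "change_coords u r s t E = (0, 0, 0, A / u^4, B / u^6)" for u
    by (simp add: change_coords_split[of u] form)
  then show ?thesis
    using good_reduction_if_rescalings_integral[OF assms(3-5)]
      integral_weier_short_form[OF assms(1,2)] by metis
qed

lemma good_reduction_if_two_torsion:
  assumes "residue_char_ne v 2" "has_2torsion E"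
    and "disc E \<noteq> 0" "v (disc E) mod 12 = 0" "integral v (j_invariant E)"
  shows "good_reduction v E"
proof -
  obtain r s t A B where form: "change_coords 1 r s t E = (0, A, 0, B, 0)"
    using two_torsion_form assms(1,2) by (metis residue_char_ne_def of_nat_numeral)
  have "change_coords u r s t E = (0, A / u^2, 0, B / u^4, 0)" for u
    by (simp add: change_coords_split[of u] form)
  then show ?thesis
    using good_reduction_if_rescalings_integral[OF assms(3-5)]
      integral_weier_two_torsion_form[OF assms(1)] by metis
qed

end

theorem lemma2p1:
  fixes v :: "'a::field \<Rightarrow> int" and E :: "'a weier"
  assumes "discrete_valuation v"
    and "elliptic E"
    and "pot_good_reduction_in TYPE('b::field) v E"
  shows "(good_reduction v E \<longrightarrow> v (disc E) mod 12 = 0) \<and>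
         ((v (disc E) mod 12 = 0 \<and>
           ((residue_char_ne v 2 \<and> residue_char_ne v 3) \<or>
            (residue_char_ne v 2 \<and> has_2torsion E)))
          \<longrightarrow> good_reduction v E)"
proof -
  interpret discretely_valued v
    by (rule discretely_valued.intro) (rule assms(1))
  have disc: "disc E \<noteq> 0"
    using assms(2) by (simp add: elliptic_def)
  have j: "integral v (j_invariant E)"
    using pot_good_reduction_imp_integral_j_invariant[OF assms(3)] .
  show ?thesis
    using good_reduction_imp_val_disc_mod_12 good_reduction_if_residue_char_not_2_3[OF _ _ disc _ j]
      good_reduction_if_two_torsion[OF _ _ disc _ j] by meson
qed

end
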